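(* Under Assumption 1, for any policy $\pi\in\Pi$ that does not use prior knowledge of the exact bias $V_{\mathrm{true}}=\|\theta_*'-\theta_*\|$, $$\sup_{(\theta_*',\theta_* )\in\Theta^\dagger\times\Theta^\dagger}R^\pi_{\theta_*',\theta_*}(T)\in\Omega(\sqrt T).$$
   Context: Model (CB-OPOD). Online features $(x_t,y_t)\in\mathcal X\times\mathcal Y\subset\mathbb R^{d_1}\times\mathbb R^{d_2}$ i.i.d.; demand $D_t=\alpha_*^\top x_t+\beta_*^\top y_tp_t+\epsilon_t$ with unknown $\theta_*=(\alpha_*,\beta_* )\in\Theta^\dagger$ and independent zero-mean $R$-subgaussian $\epsilon_t$. Offline data $\{(\hat x_n,\hat y_n,\hat p_n,\hat D_n)\}_{n=1}^N$ with deterministic $(\hat x_n,\hat y_n,\hat p_n)$ and $\hat D_n=\alpha_*'^\top\hat x_n+\beta_*'^\top\hat y_n\hat p_n+\hat\epsilon_n$ with unknown $\theta_*'\in\Theta^\dagger$. $r_\theta(p,x,y)=p(\alpha^\top x+\beta^\top yp)$, $p^*_\theta,r^*_\theta$ maximizer/maximum over $p\ge0$. $\Pi$: policies choosing $p_t$ from the offline data, past online observations and $(x_t,y_t)$. Regret $R^\pi_{\theta_*',\theta_*}(T)=\mathbb E[\sum_{t=1}^Tr^*_{\theta_*}(x_t,y_t)-r_{\theta_*}(p_t,x_t,y_t)]$. Assumption 1: (1) $\Theta^\dagger$, $\mathcal X\times\mathcal Y$ compact with norm bounds $\alpha_{\max},\beta_{\max},x_{\max},y_{\max}$; (2) $\mathbb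 E[x_1x_1^\top],\mathbb E[y_1y_1^\top]$ positive definite; (3) positive constants with $l_\alpha\le\alpha^\top x\le u_\alpha$ and $l_\beta\le-\beta^\top y\le u_\beta$ on $\Theta^\dagger\times(\mathcal X\times\mathcal Y)$. *)

theory Defs
  imports "HOL-Probability.Probability"
begin

text \<open>Parameters theta = (alpha, beta) live in 'a \<times> 'b, features x :: 'a, y :: 'b.
  An observation is (x, y, p, D).\<close>

type_synonym ('a, 'b) obs = "'a \<times> 'b \<times> real \<times> real"

definition demand :: "('a::real_inner \<times> 'b::real_inner) \<Rightarrow> 'a \<Rightarrow> 'b \<Rightarrow> real \<Rightarrow> real" where
  "demand \<theta> x y p = fst \<theta> \<bullet> x + (snd \<theta> \<bullet> y) * p"

definition revenue :: "('a::real_inner \<times> 'b::real_inner) \<Rightarrow> real \<Rightarrow> 'a \<Rightarrow> 'b \<Rightarrow> real" where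
  "revenue \<theta> p x y = p * (fst \<theta> \<bullet> x + (snd \<theta> \<bullet> y) * p)"

definition opt_revenue :: "('a::real_inner \<times> 'b::real_inner) \<Rightarrow> 'a \<Rightarrow> 'b \<Rightarrow> real" where
  "opt_revenue \<theta> x y = (SUP p\<in>{0..}. revenue \<theta> p x y)"

text \<open>Offline data set of size N: deterministic design (xh, yh, ph), noise eh, parameter theta'.\<close>
definition offline_data ::
  "('a::real_inner \<times> 'b::real_inner) \<Rightarrow> (nat \<Rightarrow> 'a) \<Rightarrow> (nat \<Rightarrow> 'b) \<Rightarrow> (nat \<Rightarrow> real) \<Rightarrow> nat
     \<Rightarrow> (nat \<Rightarrow> real) \<Rightarrow> ('a, 'b) obs list" where
  "offline_data \<theta>' xh yh ph N eh =
     map (\<lambda>n. (xh n, yh n, ph n, demand \<theta>' (xh n) (yh n) (ph n) + eh n)) [0..<N]"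

text \<open>The (already horizon- and offline-data-applied) policy
  maps the list of past online observations and the current features to a price.
  The online sample \<omega> t = ((x_t, y_t), eps_t).\<close>
fun history ::
  "(('a::real_inner, 'b::real_inner) obs list \<Rightarrow> ('a \<times> 'b) \<Rightarrow> real) \<Rightarrow> ('a \<times> 'b)
     \<Rightarrow> (nat \<Rightarrow> ('a \<times> 'b) \<times> real) \<Rightarrow> nat \<Rightarrow> ('a, 'b) obs list" where
  "history \<pi> \<theta> \<omega> 0 = []"
| "history \<pi> \<theta> \<omega> (Suc t) =
     history \<pi> \<theta> \<omega> t @
       [(let z = fst (\<omega> t); p = \<pi> (history \<pi> \<theta> \<omega> t) z
         in (fst z, snd z, p, demand \<theta> (fst z) (snd z) p + snd (\<omega> t)))]"

definition price ::
  "(('a::real_inner, 'b::real_inner) obs list \<Rightarrow> ('a \<times> 'b) \<Rightarrow> real) \<Rightarrow> ('a \<times> 'b)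
     \<Rightarrow> (nat \<Rightarrow> ('a \<times> 'b) \<times> real) \<Rightarrow> nat \<Rightarrow> real" where
  "price \<pi> \<theta> \<omega> t = \<pi> (history \<pi> \<theta> \<omega> t) (fst (\<omega> t))"

text \<open>A policy: horizon T, offline data, past online observations, current features \<mapsto> price.\<close>
type_synonym ('a, 'b) policy =
  "nat \<Rightarrow> ('a, 'b) obs list \<Rightarrow> ('a, 'b) obs list \<Rightarrow> ('a \<times> 'b) \<Rightarrow> real"

definition sample_space ::
  "('a::euclidean_space \<times> 'b::euclidean_space) measure \<Rightarrow> real measure \<Rightarrow> real measure \<Rightarrow> nat \<Rightarrow> nat
     \<Rightarrow> ((nat \<Rightarrow> ('a \<times> 'b) \<times> real) \<times> (nat \<Rightarrow> real)) measure" where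
  "sample_space F E Eh T N = (PiM {..<T} (\<lambda>_. F \<Otimes>\<^sub>M E)) \<Otimes>\<^sub>M (PiM {..<N} (\<lambda>_. Eh))"

definition policy_price ::
  "('a::euclidean_space, 'b::euclidean_space) policy \<Rightarrow> (nat \<Rightarrow> 'a) \<Rightarrow> (nat \<Rightarrow> 'b) \<Rightarrow> (nat \<Rightarrow> real)
     \<Rightarrow> nat \<Rightarrow> nat \<Rightarrow> ('a \<times> 'b) \<Rightarrow> ('a \<times> 'b)
     \<Rightarrow> (nat \<Rightarrow> ('a \<times> 'b) \<times> real) \<times> (nat \<Rightarrow> real) \<Rightarrow> nat \<Rightarrow> real" where
  "policy_price pol xh yh ph N T \<theta>' \<theta> \<omega> t =
     price (pol T (offline_data \<theta>' xh yh ph N (snd \<omega>))) \<theta> (fst \<omega>) t"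

text \<open>Expected regret R^pi_{theta', theta}(T) (integrand is nonnegative, so the
  nonnegative integral is used).\<close>
definition regret ::
  "('a::euclidean_space, 'b::euclidean_space) policy \<Rightarrow> ('a \<times> 'b) measure \<Rightarrow> real measure \<Rightarrow> real measure
     \<Rightarrow> (nat \<Rightarrow> 'a) \<Rightarrow> (nat \<Rightarrow> 'b) \<Rightarrow> (nat \<Rightarrow> real) \<Rightarrow> nat \<Rightarrow> nat
     \<Rightarrow> ('a \<times> 'b) \<Rightarrow> ('a \<times> 'b) \<Rightarrow> ennreal" where
  "regret pol F E Eh xh yh ph N T \<theta>' \<theta> =
     (\<integral>\<^sup>+ \<omega>. ennreal (\<Sum>t<T.
         opt_revenue \<theta> (fst (fst (fst \<omega> t))) (snd (fst (fst \<omega> t)))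
         - revenue \<theta> (policy_price pol xh yh ph N T \<theta>' \<theta> \<omega> t)
              (fst (fst (fst \<omega> t))) (snd (fst (fst \<omega> t))))
       \<partial>sample_space F E Eh T N)"

text \<open>Membership in Pi: prices are measurable functions of the randomness.\<close>
definition admissible_policy ::
  "('a::euclidean_space, 'b::euclidean_space) policy \<Rightarrow> ('a \<times> 'b) set \<Rightarrow> ('a \<times> 'b) measure
     \<Rightarrow> real measure \<Rightarrow> real measure \<Rightarrow> (nat \<Rightarrow> 'a) \<Rightarrow> (nat \<Rightarrow> 'b) \<Rightarrow> (nat \<Rightarrow> real) \<Rightarrow> nat \<Rightarrow> bool" where
  "admissible_policy pol \<Theta> F E Eh xh yh ph N \<longleftrightarrow>
     (\<forall>T. \<forall>\<theta>'\<in>\<Theta>. \<forall>\<theta>\<in>\<Theta>. \<forall>t<T.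
        (\<lambda>\<omega>. policy_price pol xh yh ph N T \<theta>' \<theta> \<omega> t) \<in> borel_measurable (sample_space F E Eh T N))"

definition subgaussian_zero_mean :: "real \<Rightarrow> real measure \<Rightarrow> bool" where
  "subgaussian_zero_mean R E \<longleftrightarrow>
     prob_space E \<and> sets E = sets borel \<and> integrable E (\<lambda>e. e) \<and> (\<integral>e. e \<partial>E) = 0 \<and>
     (\<forall>l. integrable E (\<lambda>e. exp (l * e)) \<and> (\<integral>e. exp (l * e) \<partial>E) \<le> exp (l\<^sup>2 * R\<^sup>2 / 2))"

text \<open>E[v v^T] as a linear operator: w \<mapsto> E[v (v^T w)].\<close>
definition second_moment :: "'v::euclidean_space measure \<Rightarrow> 'v \<Rightarrow> 'v" where
  "second_moment M w = (\<integral>v. (v \<bullet> w) *\<^sub>R v \<partial>M)"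

definition pos_def_op :: "('v::euclidean_space \<Rightarrow> 'v) \<Rightarrow> bool" where
  "pos_def_op A \<longleftrightarrow> (\<forall>w. w \<noteq> 0 \<longrightarrow> w \<bullet> A w > 0)"

text \<open>Assumption 1.  F is the law of (x_1, y_1), supported on X \<times> Y.\<close>
definition assumption1 ::
  "('a::euclidean_space \<times> 'b::euclidean_space) set \<Rightarrow> 'a set \<Rightarrow> 'b set \<Rightarrow> ('a \<times> 'b) measure \<Rightarrow> bool" where
  "assumption1 \<Theta> X Y F \<longleftrightarrow>
     compact \<Theta> \<and> \<Theta> \<noteq> {} \<and> compact X \<and> compact Y \<and>
     prob_space F \<and> sets F = sets borel \<and> emeasure F (X \<times> Y) = 1 \<and>
     pos_def_op (second_moment (distr F borel fst)) \<and>
     pos_def_op (second_moment (distr F borel snd)) \<and>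
     (\<exists>l\<^sub>\<alpha> u\<^sub>\<alpha> l\<^sub>\<beta> u\<^sub>\<beta>. 0 < l\<^sub>\<alpha> \<and> 0 < u\<^sub>\<alpha> \<and> 0 < l\<^sub>\<beta> \<and> 0 < u\<^sub>\<beta> \<and>
        (\<forall>\<theta>\<in>\<Theta>. \<forall>x\<in>X. \<forall>y\<in>Y.
           l\<^sub>\<alpha> \<le> fst \<theta> \<bullet> x \<and> fst \<theta> \<bullet> x \<le> u\<^sub>\<alpha> \<and>
           l\<^sub>\<beta> \<le> - (snd \<theta> \<bullet> y) \<and> - (snd \<theta> \<bullet> y) \<le> u\<^sub>\<beta>))"

end

theory Submission
  imports Defs
begin

text \<open>The lower bound is a two-point argument on the instances \<open>hard_param b\<close>, \<open>b \<in> {1..2}\<close>: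
  with basis-vector features the demand is \<open>1 + b - b p\<close>, maximised at \<open>(1 + b) / (2 b)\<close>.
  The offline data are generated with \<open>b = 1\<close> in both worlds, so only the online rounds can
  distinguish the online parameters \<open>1\<close> and \<open>1 + \<delta>\<close>. Their optimal prices are \<open>\<ge> \<delta>/4\<close>
  apart, so every price costs \<open>\<ge> \<delta>\<^sup>2/32\<close> in one of the two worlds. Both demand curves pass
  through the same point at price \<open>1\<close>, the optimal price of the first world; by Girsanov's formula
  for the Gaussian noise, the information gathered is \<open>\<Sum>\<^sub>t \<delta>\<^sup>2 (1 - p\<^sub>t)\<^sup>2\<close>, i.e. \<open>\<delta>\<^sup>2\<close> times
  the regret in the first world. So either that regret is at least \<open>1/\<delta>\<^sup>2\<close>, or the likelihood
  ratio has log-mean \<open>\<ge> -1/2\<close>, the two laws overlap by \<open>\<ge> 1/4\<close> and the summed regret is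
  \<open>\<ge> T \<delta>\<^sup>2 / 128\<close>. Choosing \<open>\<delta> = T powr (-1/4)\<close> makes both alternatives of order \<open>\<surd>T\<close>.\<close>

section \<open>Standard normal noise\<close>

abbreviation std_normal :: "real measure" where
  "std_normal \<equiv> density lborel std_normal_density"

lemma prob_space_std_normal: "prob_space std_normal"
  by (rule prob_space_normal_density) simp

lemma std_normal_density_shift:
  "std_normal_density (u - c) = std_normal_density u * exp (u * c - c\<^sup>2 / 2)"
  unfolding std_normal_density_def by (simp add: exp_add[symmetric] power2_eq_square field_simps)

lemma nn_integral_std_normal_shift:
  assumes [measurable]: "f \<in> borel_measurable borel"
  shows "(\<integral>\<^sup>+e. f (e + c) \<partial>std_normal) = (\<integral>\<^sup>+e. f e * ennreal (exp (e * c - c\<^sup>2 / 2)) \<partial>std_normal)"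
proof -
  have "(\<integral>\<^sup>+e. f (e + c) \<partial>std_normal)
      = (\<integral>\<^sup>+x. ennreal (std_normal_density (c + 1 * x - c)) * f (c + 1 * x) \<partial>lborel)"
    by (simp add: nn_integral_density add.commute)
  also have "\<dots> = (\<integral>\<^sup>+e. ennreal (std_normal_density (e - c)) * f e \<partial>lborel)"
    by (subst nn_integral_real_affine[where c=1 and t=c]) auto
  also have "\<dots> = (\<integral>\<^sup>+e. f e * ennreal (exp (e * c - c\<^sup>2 / 2)) \<partial>std_normal)"
    by (simp add: nn_integral_density std_normal_density_shift ennreal_mult' mult_ac)
  finally show ?thesis .
qed

lemma nn_integral_std_normal_reflect:
  assumes [measurable]: "f \<in> borel_measurable borel"
  shows "(\<integral>\<^sup>+e. f (- e) \<partial>std_normal) = (\<integral>\<^sup>+e. f e \<partial>std_normal)"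
proof -
  have "(\<integral>\<^sup>+e. f e \<partial>std_normal) = (\<integral>\<^sup>+e. ennreal (std_normal_density e) * f e \<partial>lborel)"
    by (simp add: nn_integral_density)
  also have "\<dots> = (\<integral>\<^sup>+x. ennreal (std_normal_density (0 + (-1) * x)) * f (0 + (-1) * x) \<partial>lborel)"
    by (subst nn_integral_real_affine[where c="-1" and t=0]) auto
  also have "\<dots> = (\<integral>\<^sup>+e. f (- e) \<partial>std_normal)"
    by (simp add: nn_integral_density std_normal_density_def)
  finally show ?thesis ..
qed

lemma nn_integral_std_normal_exp:
  "(\<integral>\<^sup>+e. ennreal (exp (l * e)) \<partial>std_normal) = ennreal (exp (l\<^sup>2 / 2))"
proof -
  have "(\<integral>\<^sup>+e. ennreal (exp (l * e)) \<partial>std_normal)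
      = (\<integral>\<^sup>+e. ennreal (exp (e * l - l\<^sup>2 / 2)) * ennreal (exp (l\<^sup>2 / 2)) \<partial>std_normal)"
    by (intro nn_integral_cong) (simp add: ennreal_mult[symmetric] exp_add[symmetric] mult.commute)
  also have "\<dots> = (\<integral>\<^sup>+e. ennreal (exp (e * l - l\<^sup>2 / 2)) \<partial>std_normal) * ennreal (exp (l\<^sup>2 / 2))"
    by (rule nn_integral_multc) auto
  also have "(\<integral>\<^sup>+e. ennreal (exp (e * l - l\<^sup>2 / 2)) \<partial>std_normal) = 1"
    using nn_integral_std_normal_shift[of "\<lambda>_. 1" l]
      prob_space.emeasure_space_1[OF prob_space_std_normal]
    by simp
  finally show ?thesis by simp
qed

lemma subgaussian_zero_mean_std_normal: "subgaussian_zero_mean 1 std_normal"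
proof -
  have mgf_int: "integrable std_normal (\<lambda>e. exp (l * e))" for l :: real
    using nn_integral_std_normal_exp[of l] by (auto intro!: integrableI_nonneg)
  have mgf: "(\<integral>e. exp (l * e) \<partial>std_normal) = exp (l\<^sup>2 / 2)" for l :: real
    using nn_integral_std_normal_exp[of l] by (subst (asm) nn_integral_eq_integral[OF mgf_int]) auto
  have "integrable std_normal (\<lambda>e. e)" "(\<integral>e. e \<partial>std_normal) = 0"
    using integrable_std_normal_moment[of 1] integral_std_normal_moment_odd[of 0]
    by (auto simp: integrable_density integral_density)
  with mgf_int mgf show ?thesis
    unfolding subgaussian_zero_mean_def using prob_space_std_normal by auto
qed

lemma nn_integral_std_normal_square: "(\<integral>\<^sup>+e. ennreal (e\<^sup>2) \<partial>std_normal) = 1"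
  using integrable_std_normal_moment[of 2] integral_std_normal_moment_even[of 1]
  by (subst nn_integral_eq_integral) (auto simp: integrable_density integral_density)

section \<open>Rounds with Gaussian noise\<close>

abbreviation noisy_product :: "'i set \<Rightarrow> 'z measure \<Rightarrow> ('i \<Rightarrow> 'z \<times> real) measure" where
  "noisy_product I M \<equiv> PiM I (\<lambda>_. M \<Otimes>\<^sub>M std_normal)"

lemma measurable_noisy_product_update:
  assumes "n \<in> I" "x \<in> space (noisy_product (I - {n}) M)" "z \<in> space M"
    and "A \<in> borel_measurable (noisy_product I M)"
  shows "(\<lambda>e. A (x(n := (z, e)))) \<in> borel_measurable borel"
proof -
  have "I = insert n (I - {n})" using assms(1) by auto
  then have A: "A \<in> borel_measurable (noisy_product (insert n (I - {n})) M)"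
    using assms(4) by simp
  have "(\<lambda>e. (z, e)) \<in> measurable borel (M \<Otimes>\<^sub>M std_normal)"
    using assms(3) by (auto intro!: measurable_Pair)
  from measurable_comp[OF this measurable_comp[OF measurable_component_update[OF assms(2)] A]]
  show ?thesis by (simp add: comp_def)
qed

lemma nn_integral_noisy_product_split:
  assumes M: "sigma_finite_measure M" and I: "finite I" "n \<in> I"
    and A[measurable]: "A \<in> borel_measurable (noisy_product I M)"
  shows "(\<integral>\<^sup>+w. A w \<partial>noisy_product I M)
       = (\<integral>\<^sup>+x. \<integral>\<^sup>+z. \<integral>\<^sup>+e. A (x(n := (z, e))) \<partial>std_normal \<partial>M \<partial>noisy_product (I - {n}) M)"
proof -
  interpret pair_sigma_finite M std_normal
    using M prob_space_std_normal
    by (simp add: pair_sigma_finite_def prob_space_imp_sigma_finite)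
  interpret product_sigma_finite "\<lambda>_. M \<Otimes>\<^sub>M std_normal"
    by (simp add: product_sigma_finite_def sigma_finite_measure_axioms)
  have ins: "I = insert n (I - {n})" using I by auto
  have A': "A \<in> borel_measurable (noisy_product (insert n (I - {n})) M)"
    using A ins by simp
  have "(\<integral>\<^sup>+w. A w \<partial>noisy_product I M)
      = (\<integral>\<^sup>+x. \<integral>\<^sup>+y. A (x(n := y)) \<partial>(M \<Otimes>\<^sub>M std_normal) \<partial>noisy_product (I - {n}) M)"
    by (subst ins, rule product_nn_integral_insert[OF _ _ A']) (use I in auto)
  also have "\<dots> = (\<integral>\<^sup>+x. \<integral>\<^sup>+z. \<integral>\<^sup>+e. A (x(n := (z, e))) \<partial>std_normal \<partial>M \<partial>noisy_product (I - {n}) M)"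
  proof (rule nn_integral_cong)
    fix x assume x: "x \<in> space (noisy_product (I - {n}) M)"
    have "(\<lambda>y. A (x(n := y))) \<in> borel_measurable (M \<Otimes>\<^sub>M std_normal)"
      using measurable_comp[OF measurable_component_update[OF x, of n] A'] by (simp add: comp_def)
    then show "(\<integral>\<^sup>+y. A (x(n := y)) \<partial>(M \<Otimes>\<^sub>M std_normal))
        = (\<integral>\<^sup>+z. \<integral>\<^sup>+e. A (x(n := (z, e))) \<partial>std_normal \<partial>M)"
      by (simp add: M2.nn_integral_fst[symmetric])
  qed
  finally show ?thesis .
qed

lemma nn_integral_noisy_product_cong_noise:
  assumes "sigma_finite_measure M" "finite I" "n \<in> I"
    and "A \<in> borel_measurable (noisy_product I M)" "B \<in> borel_measurable (noisy_product I M)"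
    and "\<And>x z. x \<in> space (noisy_product (I - {n}) M) \<Longrightarrow> z \<in> space M \<Longrightarrow>
       (\<integral>\<^sup>+e. A (x(n := (z, e))) \<partial>std_normal) = (\<integral>\<^sup>+e. B (x(n := (z, e))) \<partial>std_normal)"
  shows "(\<integral>\<^sup>+w. A w \<partial>noisy_product I M) = (\<integral>\<^sup>+w. B w \<partial>noisy_product I M)"
  using assms by (simp add: nn_integral_noisy_product_split cong: nn_integral_cong)

lemma measurable_noisy_product_map_noise:
  assumes "n \<in> I" and [measurable]: "f \<in> borel_measurable (noisy_product I M)"
  shows "(\<lambda>w. w(n := (fst (w n), f w))) \<in> measurable (noisy_product I M) (noisy_product I M)"
  by (rule measurable_fun_upd[where J=I]) (use assms(1) in auto)

lemma nn_integral_noisy_product_shift: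
  assumes M: "sigma_finite_measure M" and I: "finite I" "n \<in> I"
    and d[measurable]: "d \<in> borel_measurable (noisy_product I M)"
    and d_noise_invariant: "\<And>w e. d (w(n := (fst (w n), e))) = d w"
    and G[measurable]: "G \<in> borel_measurable (noisy_product I M)"
  shows "(\<integral>\<^sup>+w. G (w(n := (fst (w n), snd (w n) + d w))) \<partial>noisy_product I M)
       = (\<integral>\<^sup>+w. G w * ennreal (exp (snd (w n) * d w - (d w)\<^sup>2 / 2)) \<partial>noisy_product I M)"
proof (rule nn_integral_noisy_product_cong_noise[OF M I], goal_cases)
  case 1
  show ?case
    using measurable_noisy_product_map_noise[OF I(2), of "\<lambda>w. snd (w n) + d w"] I by measurable
next
  case 2
  show ?case using I by measurable
next
  case (3 x z)
  define c where "c = d (x(n := (z, 0)))"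
  have "d (x(n := (z, e))) = c" for e
    using d_noise_invariant[of "x(n := (z, e))" 0] by (simp add: c_def)
  then show ?case
    using nn_integral_std_normal_shift[OF measurable_noisy_product_update[OF I(2) 3 G], of c] by simp
qed

lemma nn_integral_noisy_product_reflect:
  assumes M: "sigma_finite_measure M" and I: "finite I" "n \<in> I"
    and G[measurable]: "G \<in> borel_measurable (noisy_product I M)"
  shows "(\<integral>\<^sup>+w. G (w(n := (fst (w n), - snd (w n)))) \<partial>noisy_product I M)
       = (\<integral>\<^sup>+w. G w \<partial>noisy_product I M)"
proof (rule nn_integral_noisy_product_cong_noise[OF M I _ G], goal_cases)
  case 1
  show ?case
    using measurable_noisy_product_map_noise[OF I(2), of "\<lambda>w. - snd (w n)"] I by measurable
next
  case (2 x z)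
  show ?case
    using nn_integral_std_normal_reflect[OF measurable_noisy_product_update[OF I(2) 2 G]] by simp
qed

lemma nn_integral_noisy_product_noise_square:
  assumes M: "prob_space M" and I: "finite I" "n \<in> I"
  shows "(\<integral>\<^sup>+w. ennreal ((snd (w n))\<^sup>2) \<partial>noisy_product I M) = 1"
proof -
  interpret M: prob_space M by (fact M)
  interpret prob_space "noisy_product (I - {n}) M"
    by (intro prob_space_PiM prob_space_pair M prob_space_std_normal)
  have "(\<lambda>w. ennreal ((snd (w n))\<^sup>2)) \<in> borel_measurable (noisy_product I M)"
    using I by measurable
  then show ?thesis
    using M.emeasure_space_1 emeasure_space_1
    by (simp add: nn_integral_noisy_product_split[OF M.sigma_finite_measure_axioms I]
        nn_integral_std_normal_square)
qed

text \<open>A factor that does not see the noise of round \<open>n\<close> is uncorrelated with it, since that noise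
  is symmetric.\<close>
lemma noisy_product_noise_times_invariant:
  assumes M: "prob_space M" and I: "finite I" "n \<in> I"
    and d[measurable]: "d \<in> borel_measurable (noisy_product I M)"
    and d_noise_invariant: "\<And>w e. d (w(n := (fst (w n), e))) = d w"
    and d_square: "integrable (noisy_product I M) (\<lambda>w. (d w)\<^sup>2)"
  shows "integrable (noisy_product I M) (\<lambda>w. snd (w n) * d w)"
    and "(\<integral>w. snd (w n) * d w \<partial>noisy_product I M) = 0"
proof -
  interpret M: prob_space M by (fact M)
  have [measurable]: "(\<lambda>w. snd (w n)) \<in> borel_measurable (noisy_product I M)"
    using I by measurable
  have "integrable (noisy_product I M) (\<lambda>w. (snd (w n))\<^sup>2)"
    using nn_integral_noisy_product_noise_square[OF M I] by (intro integrableI_nonneg) auto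
  then have sum_squares: "integrable (noisy_product I M) (\<lambda>w. (snd (w n))\<^sup>2 + (d w)\<^sup>2)"
    using d_square by auto
  have abs_mult_le: "\<bar>a * b\<bar> \<le> a\<^sup>2 + b\<^sup>2" for a b :: real
  proof -
    have "2 * (\<bar>a\<bar> * \<bar>b\<bar>) \<le> a\<^sup>2 + b\<^sup>2"
      using sum_squares_bound[of "\<bar>a\<bar>" "\<bar>b\<bar>"] by (simp add: mult.assoc)
    moreover have "0 \<le> \<bar>a\<bar> * \<bar>b\<bar>" by simp
    ultimately show ?thesis unfolding abs_mult by linarith
  qed
  show int: "integrable (noisy_product I M) (\<lambda>w. snd (w n) * d w)"
    by (rule Bochner_Integration.integrable_bound[OF sum_squares _ AE_I2])
      (use I in measurable, simp add: abs_mult_le)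
  have "(\<integral>\<^sup>+w. ennreal (- (snd (w n) * d w)) \<partial>noisy_product I M)
      = (\<integral>\<^sup>+w. (\<lambda>w. ennreal (snd (w n) * d w)) (w(n := (fst (w n), - snd (w n)))) \<partial>noisy_product I M)"
    using d_noise_invariant by simp
  also have "\<dots> = (\<integral>\<^sup>+w. ennreal (snd (w n) * d w) \<partial>noisy_product I M)"
    using I by (intro nn_integral_noisy_product_reflect[OF M.sigma_finite_measure_axioms]) measurable
  finally show "(\<integral>w. snd (w n) * d w \<partial>noisy_product I M) = 0"
    unfolding real_lebesgue_integral_def[OF int] by simp
qed

section \<open>Change of measure for an adaptive policy\<close>

lemma history_cong: "(\<And>s. s < t \<Longrightarrow> w s = w' s) \<Longrightarrow> history \<pi> \<theta> w t = history \<pi> \<theta> w' t"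
  by (induction t) auto

lemma price_cong:
  "(\<And>s. s < t \<Longrightarrow> w s = w' s) \<Longrightarrow> fst (w t) = fst (w' t) \<Longrightarrow> price \<pi> \<theta> w t = price \<pi> \<theta> w' t"
  unfolding price_def using history_cong[of t w w'] by simp

definition demand_drift ::
  "('a::real_inner \<times> 'b::real_inner) \<Rightarrow> ('a \<times> 'b) \<Rightarrow> ('a \<times> 'b) \<Rightarrow> real \<Rightarrow> real" where
  "demand_drift \<theta>1 \<theta>2 z p = demand \<theta>2 (fst z) (snd z) p - demand \<theta>1 (fst z) (snd z) p"

text \<open>Demand observed under \<open>\<theta>2\<close> is demand under \<open>\<theta>1\<close> with the noise shifted by the drift, so
  running the policy under \<open>\<theta>2\<close> on \<open>w\<close> is running it under \<open>\<theta>1\<close> on \<open>shifted_noise\<close>.\<close>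
definition shifted_noise ::
  "(('a::real_inner, 'b::real_inner) obs list \<Rightarrow> ('a \<times> 'b) \<Rightarrow> real) \<Rightarrow> ('a \<times> 'b) \<Rightarrow> ('a \<times> 'b)
     \<Rightarrow> nat \<Rightarrow> (nat \<Rightarrow> ('a \<times> 'b) \<times> real) \<Rightarrow> nat \<Rightarrow> ('a \<times> 'b) \<times> real" where
  "shifted_noise \<pi> \<theta>1 \<theta>2 n w =
     (\<lambda>s. if s < n then (fst (w s), snd (w s) + demand_drift \<theta>1 \<theta>2 (fst (w s)) (price \<pi> \<theta>2 w s))
          else w s)"

lemma history_shifted_noise:
  "t \<le> n \<Longrightarrow> history \<pi> \<theta>1 (shifted_noise \<pi> \<theta>1 \<theta>2 n w) t = history \<pi> \<theta>2 w t"
  by (induction t) (auto simp: Let_def shifted_noise_def demand_drift_def price_def)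

lemma fst_shifted_noise [simp]: "fst (shifted_noise \<pi> \<theta>1 \<theta>2 n w s) = fst (w s)"
  by (simp add: shifted_noise_def)

lemma price_shifted_noise:
  "t \<le> n \<Longrightarrow> price \<pi> \<theta>1 (shifted_noise \<pi> \<theta>1 \<theta>2 n w) t = price \<pi> \<theta>2 w t"
  by (simp add: price_def history_shifted_noise)

definition played_drift ::
  "(('a::real_inner, 'b::real_inner) obs list \<Rightarrow> ('a \<times> 'b) \<Rightarrow> real) \<Rightarrow> ('a \<times> 'b) \<Rightarrow> ('a \<times> 'b)
     \<Rightarrow> (nat \<Rightarrow> ('a \<times> 'b) \<times> real) \<Rightarrow> nat \<Rightarrow> real" where
  "played_drift \<pi> \<theta>1 \<theta>2 w t = demand_drift \<theta>1 \<theta>2 (fst (w t)) (price \<pi> \<theta>1 w t)"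

definition log_likelihood_ratio ::
  "(('a::real_inner, 'b::real_inner) obs list \<Rightarrow> ('a \<times> 'b) \<Rightarrow> real) \<Rightarrow> ('a \<times> 'b) \<Rightarrow> ('a \<times> 'b)
     \<Rightarrow> nat \<Rightarrow> (nat \<Rightarrow> ('a \<times> 'b) \<times> real) \<Rightarrow> real" where
  "log_likelihood_ratio \<pi> \<theta>1 \<theta>2 n w =
     (\<Sum>t<n. snd (w t) * played_drift \<pi> \<theta>1 \<theta>2 w t - (played_drift \<pi> \<theta>1 \<theta>2 w t)\<^sup>2 / 2)"

lemma played_drift_cong:
  "(\<And>s. s < t \<Longrightarrow> w s = w' s) \<Longrightarrow> fst (w t) = fst (w' t)
     \<Longrightarrow> played_drift \<pi> \<theta>1 \<theta>2 w t = played_drift \<pi> \<theta>1 \<theta>2 w' t"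
  by (simp add: played_drift_def price_cong[of t w w'])

lemma log_likelihood_ratio_cong:
  "(\<And>s. s < n \<Longrightarrow> w s = w' s) \<Longrightarrow> log_likelihood_ratio \<pi> \<theta>1 \<theta>2 n w = log_likelihood_ratio \<pi> \<theta>1 \<theta>2 n w'"
  unfolding log_likelihood_ratio_def
  by (intro sum.cong refl) (simp add: played_drift_cong[of _ w w'])

lemma borel_measurable_noisy_product_features:
  fixes M :: "('a::euclidean_space \<times> 'b::euclidean_space) measure"
  assumes sets_M: "sets M = sets borel" and t: "t \<in> I"
  shows "(\<lambda>w. fst (fst (w t))) \<in> borel_measurable (noisy_product I M)"
    and "(\<lambda>w. snd (fst (w t))) \<in> borel_measurable (noisy_product I M)"
proof -
  have "(\<lambda>w. fst (w t)) \<in> measurable (noisy_product I M) M"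
    using measurable_compose[OF measurable_component_singleton[OF t, of "\<lambda>_. M \<Otimes>\<^sub>M std_normal"]
        measurable_fst] by simp
  then have z: "(\<lambda>w. fst (w t)) \<in> measurable (noisy_product I M) (borel \<Otimes>\<^sub>M borel)"
    by (simp add: measurable_cong_sets[OF refl sets_M] borel_prod)
  show "(\<lambda>w. fst (fst (w t))) \<in> borel_measurable (noisy_product I M)"
    using measurable_compose[OF z measurable_fst] by simp
  show "(\<lambda>w. snd (fst (w t))) \<in> borel_measurable (noisy_product I M)"
    using measurable_compose[OF z measurable_snd] by simp
qed

lemma borel_measurable_demand [measurable]:
  fixes \<theta> :: "'a::euclidean_space \<times> 'b::euclidean_space"
  assumes [measurable]: "f \<in> borel_measurable N" "g \<in> borel_measurable N" "h \<in> borel_measurable N"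
  shows "(\<lambda>x. demand \<theta> (f x) (g x) (h x)) \<in> borel_measurable N"
  unfolding demand_def by measurable

lemma borel_measurable_played_drift:
  fixes M :: "('a::euclidean_space \<times> 'b::euclidean_space) measure"
  assumes "sets M = sets borel" "t < T"
    and "(\<lambda>w. price \<pi> \<theta>1 w t) \<in> borel_measurable (noisy_product {..<T} M)"
  shows "(\<lambda>w. played_drift \<pi> \<theta>1 \<theta>2 w t) \<in> borel_measurable (noisy_product {..<T} M)"
  unfolding played_drift_def demand_drift_def using assms
  by (intro borel_measurable_diff borel_measurable_demand borel_measurable_noisy_product_features) auto

lemma borel_measurable_log_likelihood_ratio:
  fixes M :: "('a::euclidean_space \<times> 'b::euclidean_space) measure"
  assumes "sets M = sets borel" "n \<le> T"
    and "\<And>t. t < T \<Longrightarrow> (\<lambda>w. price \<pi> \<theta>1 w t) \<in> borel_measurable (noisy_product {..<T} M)"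
  shows "log_likelihood_ratio \<pi> \<theta>1 \<theta>2 n \<in> borel_measurable (noisy_product {..<T} M)"
  unfolding log_likelihood_ratio_def[abs_def]
proof (rule borel_measurable_sum)
  fix t assume "t \<in> {..<n}"
  with assms have t: "t < T" by simp
  then have [measurable]: "t \<in> {..<T}" by simp
  have [measurable]: "(\<lambda>w. played_drift \<pi> \<theta>1 \<theta>2 w t) \<in> borel_measurable (noisy_product {..<T} M)"
    using assms t by (intro borel_measurable_played_drift)
  show "(\<lambda>w. snd (w t) * played_drift \<pi> \<theta>1 \<theta>2 w t - (played_drift \<pi> \<theta>1 \<theta>2 w t)\<^sup>2 / 2)
      \<in> borel_measurable (noisy_product {..<T} M)"
    by measurable
qed

lemma shifted_noise_Suc:
  "shifted_noise \<pi> \<theta>1 \<theta>2 (Suc n) w = (shifted_noise \<pi> \<theta>1 \<theta>2 n w)(n :=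
     (fst (w n), snd (w n) + demand_drift \<theta>1 \<theta>2 (fst (w n)) (price \<pi> \<theta>2 w n)))"
  by (rule ext) (simp add: shifted_noise_def)

lemma shifted_noise_self [simp]: "shifted_noise \<pi> \<theta>1 \<theta>2 n w n = w n"
  by (simp add: shifted_noise_def)

text \<open>Girsanov's formula for the adaptively chosen drift: the law of the online sample under
  \<open>\<theta>2\<close> has density \<open>exp (log_likelihood_ratio \<pi> \<theta>1 \<theta>2 T)\<close> with respect to its law under \<open>\<theta>1\<close>.\<close>
lemma nn_integral_shifted_noise:
  fixes M :: "('a::euclidean_space \<times> 'b::euclidean_space) measure"
  assumes M: "prob_space M" "sets M = sets borel"
    and price: "\<And>t. t < T \<Longrightarrow> (\<lambda>w. price \<pi> \<theta>1 w t) \<in> borel_measurable (noisy_product {..<T} M)"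
    and "n \<le> T" and "G \<in> borel_measurable (noisy_product {..<T} M)"
  shows "(\<integral>\<^sup>+w. G (shifted_noise \<pi> \<theta>1 \<theta>2 n w) \<partial>noisy_product {..<T} M)
       = (\<integral>\<^sup>+w. G w * ennreal (exp (log_likelihood_ratio \<pi> \<theta>1 \<theta>2 n w)) \<partial>noisy_product {..<T} M)"
  using assms(4,5)
proof (induction n arbitrary: G)
  case 0
  then show ?case by (simp add: shifted_noise_def log_likelihood_ratio_def)
next
  case (Suc n)
  let ?P = "noisy_product {..<T} M"
  let ?d = "\<lambda>w. played_drift \<pi> \<theta>1 \<theta>2 w n"
  let ?L = "\<lambda>w. ennreal (exp (log_likelihood_ratio \<pi> \<theta>1 \<theta>2 n w))"
  define \<Psi> where "\<Psi> w = w(n := (fst (w n), snd (w n) + ?d w))" for w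
  have n: "n < T" "n \<in> {..<T}" using Suc.prems by auto
  interpret M: prob_space M by (fact M(1))
  have [measurable]: "?d \<in> borel_measurable ?P"
    using borel_measurable_played_drift[OF M(2) n(1) price[OF n(1)]] .
  have [measurable]: "G \<in> borel_measurable ?P" "\<Psi> \<in> measurable ?P ?P"
    using Suc.prems measurable_noisy_product_map_noise[OF n(2), of "\<lambda>w. snd (w n) + ?d w"] n
    by (auto simp: \<Psi>_def[abs_def])
  have [measurable]: "?L \<in> borel_measurable ?P"
    using borel_measurable_log_likelihood_ratio[OF M(2), of n T] Suc.prems price by simp
  have d_noise_invariant: "?d (w(n := (fst (w n), e))) = ?d w" for w e
    by (rule played_drift_cong) auto
  have L_\<Psi>: "?L (\<Psi> w) = ?L w" for w
    by (rule arg_cong[OF log_likelihood_ratio_cong]) (simp add: \<Psi>_def)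
  have "(\<integral>\<^sup>+w. G (shifted_noise \<pi> \<theta>1 \<theta>2 (Suc n) w) \<partial>?P)
      = (\<integral>\<^sup>+w. G (\<Psi> (shifted_noise \<pi> \<theta>1 \<theta>2 n w)) \<partial>?P)"
    by (simp add: shifted_noise_Suc \<Psi>_def played_drift_def price_shifted_noise)
  also have "\<dots> = (\<integral>\<^sup>+w. G (\<Psi> w) * ?L w \<partial>?P)"
    using Suc.prems by (intro Suc.IH) auto
  also have "\<dots> = (\<integral>\<^sup>+w. G (\<Psi> w) * ?L (\<Psi> w) \<partial>?P)"
    by (simp add: L_\<Psi>)
  also have "\<dots> = (\<integral>\<^sup>+w. G w * ?L w * ennreal (exp (snd (w n) * ?d w - (?d w)\<^sup>2 / 2)) \<partial>?P)"
    unfolding \<Psi>_def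
    by (rule nn_integral_noisy_product_shift[where d="?d" and G="\<lambda>w. G w * ?L w",
          OF M.sigma_finite_measure_axioms finite_lessThan n(2) _ d_noise_invariant]) measurable
  also have "\<dots> = (\<integral>\<^sup>+w. G w * ennreal (exp (log_likelihood_ratio \<pi> \<theta>1 \<theta>2 (Suc n) w)) \<partial>?P)"
    by (intro nn_integral_cong) (simp add: log_likelihood_ratio_def exp_add ennreal_mult mult.assoc)
  finally show ?case .
qed

lemma nn_integral_likelihood_ratio:
  fixes M :: "('a::euclidean_space \<times> 'b::euclidean_space) measure"
  assumes "prob_space M" "sets M = sets borel"
    and "\<And>t. t < T \<Longrightarrow> (\<lambda>w. price \<pi> \<theta>1 w t) \<in> borel_measurable (noisy_product {..<T} M)"
  shows "(\<integral>\<^sup>+w. ennreal (exp (log_likelihood_ratio \<pi> \<theta>1 \<theta>2 T w)) \<partial>noisy_product {..<T} M) = 1"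
proof -
  interpret prob_space "noisy_product {..<T} M"
    by (intro prob_space_PiM prob_space_pair assms(1) prob_space_std_normal)
  show ?thesis
    using nn_integral_shifted_noise[OF assms, of T "\<lambda>_. 1" \<theta>2] by (simp add: emeasure_space_1)
qed

lemma integral_log_likelihood_ratio:
  fixes M :: "('a::euclidean_space \<times> 'b::euclidean_space) measure"
  assumes M: "prob_space M" "sets M = sets borel"
    and price: "\<And>t. t < T \<Longrightarrow> (\<lambda>w. price \<pi> \<theta>1 w t) \<in> borel_measurable (noisy_product {..<T} M)"
    and drift_square: "integrable (noisy_product {..<T} M) (\<lambda>w. \<Sum>t<T. (played_drift \<pi> \<theta>1 \<theta>2 w t)\<^sup>2)"
  shows "integrable (noisy_product {..<T} M) (log_likelihood_ratio \<pi> \<theta>1 \<theta>2 T)"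
    and "(\<integral>w. log_likelihood_ratio \<pi> \<theta>1 \<theta>2 T w \<partial>noisy_product {..<T} M)
       = - (\<integral>w. (\<Sum>t<T. (played_drift \<pi> \<theta>1 \<theta>2 w t)\<^sup>2) \<partial>noisy_product {..<T} M) / 2"
proof -
  let ?P = "noisy_product {..<T} M"
  let ?d = "played_drift \<pi> \<theta>1 \<theta>2"
  have d_meas[measurable]: "(\<lambda>w. ?d w t) \<in> borel_measurable ?P" if "t < T" for t
    using borel_measurable_played_drift[OF M(2) that price[OF that]] .
  have d_square: "integrable ?P (\<lambda>w. (?d w t)\<^sup>2)" if t: "t < T" for t
  proof (rule Bochner_Integration.integrable_bound[OF drift_square _ AE_I2])
    show "(\<lambda>w. (?d w t)\<^sup>2) \<in> borel_measurable ?P" using t by measurable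
    show "norm ((?d w t)\<^sup>2) \<le> norm (\<Sum>t<T. (?d w t)\<^sup>2)" for w
      using member_le_sum[of t "{..<T}" "\<lambda>t. (?d w t)\<^sup>2"] t by (simp add: sum_nonneg)
  qed
  have d_noise_invariant: "?d (w(t := (fst (w t), e))) t = ?d w t" for w t e
    by (rule played_drift_cong) auto
  have noise_d: "integrable ?P (\<lambda>w. snd (w t) * ?d w t)" "(\<integral>w. snd (w t) * ?d w t \<partial>?P) = 0"
    if "t < T" for t
    using noisy_product_noise_times_invariant[OF M(1) finite_lessThan _ d_meas d_noise_invariant
        d_square]
      that by auto
  have llr: "log_likelihood_ratio \<pi> \<theta>1 \<theta>2 T = (\<lambda>w. \<Sum>t<T. snd (w t) * ?d w t - (?d w t)\<^sup>2 / 2)"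
    by (simp add: log_likelihood_ratio_def fun_eq_iff)
  show "integrable ?P (log_likelihood_ratio \<pi> \<theta>1 \<theta>2 T)"
    unfolding llr using noise_d d_square by auto
  have "(\<integral>w. log_likelihood_ratio \<pi> \<theta>1 \<theta>2 T w \<partial>?P) = (\<Sum>t<T. - (\<integral>w. (?d w t)\<^sup>2 \<partial>?P) / 2)"
    unfolding llr using noise_d d_square by simp
  also have "\<dots> = - (\<integral>w. (\<Sum>t<T. (?d w t)\<^sup>2) \<partial>?P) / 2"
    using d_square by (simp add: sum_negf sum_divide_distrib)
  finally show "(\<integral>w. log_likelihood_ratio \<pi> \<theta>1 \<theta>2 T w \<partial>?P)
      = - (\<integral>w. (\<Sum>t<T. (?d w t)\<^sup>2) \<partial>?P) / 2" .
qed

lemma min_one_square_ge: "17/10 * s - (1 + s\<^sup>2) / 2 \<le> min 1 (s\<^sup>2 :: real)"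
proof (rule min.boundedI)
  have "3/2 * s\<^sup>2 - 17/10 * s + 1/2 = 3/2 * (s - 17/30)\<^sup>2 + 11/600"
    by (simp add: power2_eq_square algebra_simps)
  then have "0 \<le> 3/2 * s\<^sup>2 - 17/10 * s + 1/2" by simp
  then show "17/10 * s - (1 + s\<^sup>2) / 2 \<le> s\<^sup>2" by argo
  have "1/2 * s\<^sup>2 - 17/10 * s + 3/2 = 1/2 * (s - 17/10)\<^sup>2 + 11/200"
    by (simp add: power2_eq_square algebra_simps)
  then have "0 \<le> 1/2 * s\<^sup>2 - 17/10 * s + 3/2" by simp
  then show "17/10 * s - (1 + s\<^sup>2) / 2 \<le> 1" by argo
qed

text \<open>If a likelihood ratio \<open>exp Y\<close> has log-mean at least \<open>-1/2\<close>, the two laws overlap by at least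
  \<open>1/4\<close>; the proof goes through the Hellinger affinity \<open>\<integral> exp (Y / 2)\<close>.\<close>
lemma (in prob_space) integral_min_one_exp_ge:
  fixes Y :: "'a \<Rightarrow> real"
  assumes Y: "integrable M Y" and L: "integrable M (\<lambda>x. exp (Y x))" "(\<integral>x. exp (Y x) \<partial>M) = 1"
    and log_mean: "- 1 / 2 \<le> (\<integral>x. Y x \<partial>M)"
  shows "1 / 4 \<le> (\<integral>x. min 1 (exp (Y x)) \<partial>M)"
proof -
  have [measurable]: "Y \<in> borel_measurable M" using Y by auto
  have "exp (y / 2) \<le> 1 + exp y" for y :: real
  proof (cases "y \<le> 0")
    case True
    then have "exp (y / 2) \<le> 1" by simp
    then show ?thesis using exp_gt_zero[of y] by linarith
  next
    case False
    then have "exp (y / 2) \<le> exp y" by simp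
    then show ?thesis by linarith
  qed
  moreover have "integrable M (\<lambda>x. 1 + exp (Y x))" using L by auto
  ultimately have sqrt_L: "integrable M (\<lambda>x. exp (Y x / 2))"
    by (auto intro: Bochner_Integration.integrable_bound[where f="\<lambda>x. 1 + exp (Y x)", OF _ _ AE_I2])
  have "3 / 4 \<le> (\<integral>x. 1 + Y x / 2 \<partial>M)"
    using Y log_mean by (simp add: prob_space)
  also have "\<dots> \<le> (\<integral>x. exp (Y x / 2) \<partial>M)"
    using Y sqrt_L by (intro integral_mono exp_ge_add_one_self) auto
  finally have affinity: "3 / 4 \<le> (\<integral>x. exp (Y x / 2) \<partial>M)" .
  have "exp (Y x) = (exp (Y x / 2))\<^sup>2" for x
    by (simp add: power2_eq_square exp_add[symmetric])
  then have "17/10 * exp (Y x / 2) - (1 + exp (Y x)) / 2 \<le> min 1 (exp (Y x))" for x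
    using min_one_square_ge[of "exp (Y x / 2)"] by simp
  moreover have "integrable M (\<lambda>x. min 1 (exp (Y x)))"
    by (rule Bochner_Integration.integrable_bound[OF L(1)]) auto
  ultimately have "(\<integral>x. 17/10 * exp (Y x / 2) - (1 + exp (Y x)) / 2 \<partial>M)
      \<le> (\<integral>x. min 1 (exp (Y x)) \<partial>M)"
    using sqrt_L L by (intro integral_mono) auto
  moreover have "(\<integral>x. 17/10 * exp (Y x / 2) - (1 + exp (Y x)) / 2 \<partial>M)
      = 17/10 * (\<integral>x. exp (Y x / 2) \<partial>M) - 1"
    using sqrt_L L by (simp add: prob_space)
  ultimately show ?thesis using affinity by linarith
qed

section \<open>The hard instance\<close>

definition all_ones :: "'a::euclidean_space" where
  "all_ones = (\<Sum>b\<in>Basis. b)"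

lemma inner_all_ones_Basis [simp]: "b \<in> Basis \<Longrightarrow> all_ones \<bullet> b = 1"
  unfolding all_ones_def by (simp add: inner_sum_left inner_Basis)

definition hard_param :: "real \<Rightarrow> ('a::euclidean_space \<times> 'b::euclidean_space)" where
  "hard_param b = ((1 + b) *\<^sub>R all_ones, (- b) *\<^sub>R all_ones)"

definition hard_params :: "('a::euclidean_space \<times> 'b::euclidean_space) set" where
  "hard_params = hard_param ` {1..2}"

lemma demand_hard_param:
  "x \<in> Basis \<Longrightarrow> y \<in> Basis \<Longrightarrow> demand (hard_param b) x y p = 1 + b - b * p"
  by (simp add: demand_def hard_param_def)

lemma revenue_hard_param:
  "x \<in> Basis \<Longrightarrow> y \<in> Basis \<Longrightarrow> revenue (hard_param b) p x y = p * (1 + b - b * p)"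
  by (simp add: revenue_def hard_param_def)

lemma opt_revenue_hard_param:
  assumes b: "b > 0" and x: "x \<in> Basis" and y: "y \<in> Basis"
  shows "opt_revenue (hard_param b) x y = (1 + b)\<^sup>2 / (4 * b)"
  unfolding opt_revenue_def
proof (rule cSup_eq_maximum)
  show "(1 + b)\<^sup>2 / (4 * b) \<in> (\<lambda>p. revenue (hard_param b) p x y) ` {0..}"
  proof
    show "(1 + b)\<^sup>2 / (4 * b) = revenue (hard_param b) ((1 + b) / (2 * b)) x y"
      using b by (simp add: revenue_hard_param[OF x y] field_simps power2_eq_square)
  qed (use b in simp)
next
  fix r assume "r \<in> (\<lambda>p. revenue (hard_param b) p x y) ` {0..}"
  then obtain p where r: "r = p * (1 + b - b * p)" using revenue_hard_param[OF x y] by auto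
  have "(1 + b)\<^sup>2 / (4 * b) - r = (2 * b * p - (1 + b))\<^sup>2 / (4 * b)"
    using b unfolding r by (simp add: field_simps power2_eq_square)
  also have "\<dots> \<ge> 0" using b by simp
  finally show "r \<le> (1 + b)\<^sup>2 / (4 * b)" by simp
qed

lemma revenue_gap_hard_param:
  assumes "b > 0" "x \<in> Basis" "y \<in> Basis"
  shows "opt_revenue (hard_param b) x y - revenue (hard_param b) p x y
    = b * (p - (1 + b) / (2 * b))\<^sup>2"
  using assms by (simp add: opt_revenue_hard_param revenue_hard_param field_simps power2_eq_square)

definition basis_feature_law :: "('a::euclidean_space \<times> 'b::euclidean_space) measure" where
  "basis_feature_law = distr (measure_pmf (pmf_of_set (Basis \<times> Basis))) borel id"

lemma sets_basis_feature_law [simp, measurable_cong]: "sets basis_feature_law = sets borel"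
  by (simp add: basis_feature_law_def)

lemma prob_space_basis_feature_law: "prob_space basis_feature_law"
  unfolding basis_feature_law_def
  by (rule prob_space.prob_space_distr) (auto simp: measure_pmf.prob_space_axioms)

lemma basis_pairs_borel: "Basis \<times> Basis \<in> sets borel"
  by (intro borel_closed finite_imp_closed) simp

lemma AE_basis_feature_law: "AE z in basis_feature_law. z \<in> Basis \<times> Basis"
  unfolding basis_feature_law_def
  using basis_pairs_borel
  by (subst AE_distr_iff) (auto simp: AE_measure_pmf_iff)

lemma emeasure_basis_feature_law: "emeasure basis_feature_law (Basis \<times> Basis) = 1"
  unfolding basis_feature_law_def using basis_pairs_borel
  by (subst emeasure_distr) auto

lemma pos_def_second_moment_basis_feature_law:
  fixes f :: "('a::euclidean_space \<times> 'b::euclidean_space) \<Rightarrow> 'c::euclidean_space"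
  assumes f[measurable]: "f \<in> borel_measurable borel" and onto: "Basis \<subseteq> f ` (Basis \<times> Basis)"
  shows "pos_def_op (second_moment (distr basis_feature_law borel f))"
  unfolding pos_def_op_def
proof (intro allI impI)
  fix w :: 'c assume "w \<noteq> 0"
  then obtain b where b: "b \<in> Basis" "b \<bullet> w \<noteq> 0"
    using euclidean_eqI[of w 0] by (auto simp: inner_commute)
  obtain z where z: "z \<in> Basis \<times> Basis" "f z = b" using onto b(1) by blast
  have [measurable]: "(\<lambda>v::'c. (v \<bullet> w) *\<^sub>R v) \<in> borel_measurable borel" by measurable
  have "w \<bullet> second_moment (distr basis_feature_law borel f) w
      = w \<bullet> (\<integral>z. (f z \<bullet> w) *\<^sub>R f z \<partial>measure_pmf (pmf_of_set (Basis \<times> Basis)))"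
    unfolding second_moment_def basis_feature_law_def by (simp add: integral_distr)
  also have "\<dots> = (\<Sum>z\<in>Basis \<times> Basis. (f z \<bullet> w)\<^sup>2 / card (Basis \<times> Basis :: ('a \<times> 'b) set))"
    by (subst integral_measure_pmf)
      (auto simp: inner_sum_right power2_eq_square inner_commute)
  also have "\<dots> > 0"
    using z b by (intro sum_pos2[OF _ z(1)]) (auto simp: card_gt_0_iff)
  finally show "w \<bullet> second_moment (distr basis_feature_law borel f) w > 0" .
qed

lemma assumption1_hard_instance:
  "assumption1 (hard_params :: ('a::euclidean_space \<times> 'b::euclidean_space) set) Basis Basis
     basis_feature_law"
proof -
  have "continuous_on {1..2} (hard_param :: real \<Rightarrow> 'a \<times> 'b)"
    unfolding hard_param_def by (intro continuous_intros)
  then have "compact (hard_params :: ('a \<times> 'b) set)"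
    unfolding hard_params_def by (rule compact_continuous_image) simp
  moreover have "Basis \<subseteq> fst ` (Basis \<times> Basis :: ('a \<times> 'b) set)"
    and "Basis \<subseteq> snd ` (Basis \<times> Basis :: ('a \<times> 'b) set)"
    by (auto simp: image_iff intro: SOME_Basis)
  moreover have "\<exists>l\<^sub>\<alpha> u\<^sub>\<alpha> l\<^sub>\<beta> u\<^sub>\<beta>. 0 < l\<^sub>\<alpha> \<and> 0 < u\<^sub>\<alpha> \<and> 0 < l\<^sub>\<beta> \<and> 0 < u\<^sub>\<beta> \<and>
      (\<forall>\<theta>\<in>(hard_params :: ('a \<times> 'b) set). \<forall>x\<in>Basis. \<forall>y\<in>Basis.
        l\<^sub>\<alpha> \<le> fst \<theta> \<bullet> x \<and> fst \<theta> \<bullet> x \<le> u\<^sub>\<alpha> \<and> l\<^sub>\<beta> \<le> - (snd \<theta> \<bullet> y) \<and> - (snd \<theta> \<bullet> y) \<le> u\<^sub>\<beta>)"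
    by (intro exI[of _ 2] exI[of _ 3] exI[of _ 1] exI[of _ 2])
      (auto simp: hard_params_def hard_param_def inner_commute[of _ all_ones])
  ultimately show ?thesis
    unfolding assumption1_def
    using prob_space_basis_feature_law emeasure_basis_feature_law
    by (auto intro!: pos_def_second_moment_basis_feature_law
        simp: hard_params_def finite_imp_compact borel_prod[symmetric])
qed

section \<open>The two-point lower bound\<close>

lemma AE_noisy_product_basis_features:
  "finite I \<Longrightarrow> AE w in noisy_product I basis_feature_law. \<forall>t\<in>I. fst (w t) \<in> Basis \<times> Basis"
proof (intro eventually_ball_finite ballI AE_PiM_component)
  fix t
  show "prob_space (basis_feature_law \<Otimes>\<^sub>M std_normal)"
    by (intro prob_space_pair prob_space_basis_feature_law prob_space_std_normal)
  have "AE z in distr (basis_feature_law \<Otimes>\<^sub>M std_normal) basis_feature_law fst. z \<in> Basis \<times> Basis"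
    by (subst prob_space.distr_pair_fst[OF prob_space_std_normal]) (rule AE_basis_feature_law)
  then show "AE z in basis_feature_law \<Otimes>\<^sub>M std_normal. fst z \<in> Basis \<times> Basis"
    by (rule AE_distrD[OF measurable_fst])
qed

lemma played_drift_hard_param:
  "fst (w t) \<in> Basis \<times> Basis \<Longrightarrow> played_drift \<pi> (hard_param b1) (hard_param b2) w t
     = (b2 - b1) * (1 - price \<pi> (hard_param b1) w t)"
  by (auto simp: played_drift_def demand_drift_def demand_hard_param algebra_simps)

text \<open>By \<open>revenue_gap_hard_param\<close> the summand is the regret of round \<open>t\<close> on basis-vector
  features, so this is the online regret on \<open>hard_param b\<close> of a policy that has already been given
  its offline data.\<close>
definition hard_regret ::
  "(('a::euclidean_space, 'b::euclidean_space) obs list \<Rightarrow> ('a \<times> 'b) \<Rightarrow> real) \<Rightarrow> nat \<Rightarrow> real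
     \<Rightarrow> ennreal" where
  "hard_regret \<pi> T b = (\<integral>\<^sup>+w. ennreal (\<Sum>t<T. b * (price \<pi> (hard_param b) w t - (1 + b) / (2 * b))\<^sup>2)
     \<partial>noisy_product {..<T} basis_feature_law)"

lemma hard_regret_change_of_measure:
  fixes \<pi> :: "('a::euclidean_space, 'b::euclidean_space) obs list \<Rightarrow> ('a \<times> 'b) \<Rightarrow> real"
  assumes price: "\<And>t. t < T \<Longrightarrow>
    (\<lambda>w. price \<pi> (hard_param 1) w t) \<in> borel_measurable (noisy_product {..<T} basis_feature_law)"
  shows "hard_regret \<pi> T b =
    (\<integral>\<^sup>+w. ennreal (\<Sum>t<T. b * (price \<pi> (hard_param 1) w t - (1 + b) / (2 * b))\<^sup>2)
      * ennreal (exp (log_likelihood_ratio \<pi> (hard_param 1) (hard_param b) T w))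
    \<partial>noisy_product {..<T} basis_feature_law)"
proof -
  define G where "G w = ennreal (\<Sum>t<T. b * (price \<pi> (hard_param 1) w t - (1 + b) / (2 * b))\<^sup>2)" for w
  have "G (shifted_noise \<pi> (hard_param 1) (hard_param b) T w)
      = ennreal (\<Sum>t<T. b * (price \<pi> (hard_param b) w t - (1 + b) / (2 * b))\<^sup>2)" for w
    unfolding G_def by (intro arg_cong[where f=ennreal] sum.cong) (simp_all add: price_shifted_noise)
  then have "hard_regret \<pi> T b
      = (\<integral>\<^sup>+w. G (shifted_noise \<pi> (hard_param 1) (hard_param b) T w)
          \<partial>noisy_product {..<T} basis_feature_law)"
    by (simp add: hard_regret_def)
  also have "\<dots> = (\<integral>\<^sup>+w. G w * ennreal (exp (log_likelihood_ratio \<pi> (hard_param 1) (hard_param b) T w))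
      \<partial>noisy_product {..<T} basis_feature_law)"
  proof (rule nn_integral_shifted_noise[OF prob_space_basis_feature_law sets_basis_feature_law price
        order_refl])
    show "G \<in> borel_measurable (noisy_product {..<T} basis_feature_law)"
      unfolding G_def[abs_def] using price by measurable
  qed
  finally show ?thesis by (simp add: G_def)
qed

lemma nn_integral_played_drift_hard_param:
  fixes \<pi> :: "('a::euclidean_space, 'b::euclidean_space) obs list \<Rightarrow> ('a \<times> 'b) \<Rightarrow> real" and T :: nat
  defines "P \<equiv> noisy_product {..<T} (basis_feature_law :: ('a \<times> 'b) measure)"
  assumes price: "\<And>t. t < T \<Longrightarrow> (\<lambda>w. price \<pi> (hard_param 1) w t) \<in> borel_measurable P"
  shows "(\<integral>\<^sup>+w. ennreal (\<Sum>t<T. (played_drift \<pi> (hard_param 1) (hard_param (1 + \<delta>)) w t)\<^sup>2) \<partial>P)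
    = ennreal (\<delta>\<^sup>2) * hard_regret \<pi> T 1"
proof -
  let ?G = "\<lambda>w. ennreal (\<Sum>t<T. (price \<pi> (hard_param 1) w t - 1)\<^sup>2)"
  have "AE w in P. (\<Sum>t<T. (played_drift \<pi> (hard_param 1) (hard_param (1 + \<delta>)) w t)\<^sup>2)
      = \<delta>\<^sup>2 * (\<Sum>t<T. (price \<pi> (hard_param 1) w t - 1)\<^sup>2)"
    using AE_noisy_product_basis_features[OF finite_lessThan[of T]] unfolding P_def
    by eventually_elim
      (simp add: played_drift_hard_param sum_distrib_left power_mult_distrib power2_commute)
  then have "(\<integral>\<^sup>+w. ennreal (\<Sum>t<T. (played_drift \<pi> (hard_param 1) (hard_param (1 + \<delta>)) w t)\<^sup>2) \<partial>P)
      = (\<integral>\<^sup>+w. ennreal (\<delta>\<^sup>2) * ?G w \<partial>P)"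
    by (intro nn_integral_cong_AE) (auto elim!: eventually_mono simp: ennreal_mult sum_nonneg)
  also have "\<dots> = ennreal (\<delta>\<^sup>2) * (\<integral>\<^sup>+w. ?G w \<partial>P)"
    using price
    by (intro nn_integral_cmult measurable_compose[OF _ measurable_ennreal] borel_measurable_sum) auto
  finally show ?thesis
    by (simp add: hard_regret_def P_def)
qed

lemma hard_likelihood_overlap:
  fixes \<pi> :: "('a::euclidean_space, 'b::euclidean_space) obs list \<Rightarrow> ('a \<times> 'b) \<Rightarrow> real" and T :: nat
  defines "P \<equiv> noisy_product {..<T} (basis_feature_law :: ('a \<times> 'b) measure)"
  assumes price: "\<And>t. t < T \<Longrightarrow> (\<lambda>w. price \<pi> (hard_param 1) w t) \<in> borel_measurable P"
    and \<delta>: "0 < \<delta>" and regret_small: "hard_regret \<pi> T 1 < ennreal (1 / \<delta>\<^sup>2)"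
  shows "1 / 4 \<le> (\<integral>w. min 1 (exp (log_likelihood_ratio \<pi> (hard_param 1) (hard_param (1 + \<delta>)) T w)) \<partial>P)"
proof -
  interpret prob_space P
    unfolding P_def
    by (intro prob_space_PiM prob_space_pair prob_space_basis_feature_law prob_space_std_normal)
  let ?d = "played_drift \<pi> (hard_param 1) (hard_param (1 + \<delta>))"
  let ?Y = "log_likelihood_ratio \<pi> (hard_param 1) (hard_param (1 + \<delta>)) T"
  note price' = price[unfolded P_def]
  have [measurable]: "(\<lambda>w. ?d w t) \<in> borel_measurable P" if "t < T" for t
    using borel_measurable_played_drift[OF sets_basis_feature_law that price'[OF that]]
    by (simp add: P_def)
  obtain r where r: "hard_regret \<pi> T 1 = ennreal r" "0 \<le> r" "r < 1 / \<delta>\<^sup>2"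
    using regret_small by (cases "hard_regret \<pi> T 1") (auto simp: ennreal_less_iff)
  have drift_nn: "(\<integral>\<^sup>+w. ennreal (\<Sum>t<T. (?d w t)\<^sup>2) \<partial>P) = ennreal (\<delta>\<^sup>2 * r)"
    using nn_integral_played_drift_hard_param[OF price'] r by (simp add: P_def ennreal_mult)
  then have drift_int: "integrable P (\<lambda>w. \<Sum>t<T. (?d w t)\<^sup>2)"
    by (intro integrableI_nonneg) (auto intro!: sum_nonneg)
  have "0 \<le> (\<integral>w. (\<Sum>t<T. (?d w t)\<^sup>2) \<partial>P)"
    by (intro integral_nonneg_AE) (auto intro!: sum_nonneg)
  then have "(\<integral>w. (\<Sum>t<T. (?d w t)\<^sup>2) \<partial>P) = \<delta>\<^sup>2 * r"
    using drift_nn drift_int r(2) by (subst (asm) nn_integral_eq_integral) (auto intro!: sum_nonneg)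
  also have "\<dots> < 1" using r \<delta> by (simp add: field_simps)
  finally have drift_small: "(\<integral>w. (\<Sum>t<T. (?d w t)\<^sup>2) \<partial>P) < 1" .
  have log_mean: "integrable P ?Y" "(\<integral>w. ?Y w \<partial>P) = - (\<integral>w. (\<Sum>t<T. (?d w t)\<^sup>2) \<partial>P) / 2"
    using integral_log_likelihood_ratio[OF prob_space_basis_feature_law sets_basis_feature_law
        price' drift_int[unfolded P_def]]
    by (simp_all add: P_def)
  have exp_nn: "(\<integral>\<^sup>+w. ennreal (exp (?Y w)) \<partial>P) = 1"
    using nn_integral_likelihood_ratio[OF prob_space_basis_feature_law sets_basis_feature_law price']
    by (simp add: P_def)
  then have exp_int: "integrable P (\<lambda>w. exp (?Y w))"
    using log_mean(1) by (intro integrableI_nonneg) auto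
  have "(\<integral>w. exp (?Y w) \<partial>P) = 1"
    using exp_nn by (subst (asm) nn_integral_eq_integral[OF exp_int]) auto
  moreover have "- 1 / 2 \<le> (\<integral>w. ?Y w \<partial>P)"
    using log_mean(2) drift_small by simp
  ultimately show ?thesis
    using log_mean(1) exp_int by (intro integral_min_one_exp_ge)
qed

lemma half_sq_dist_le_weighted_sq_dists:
  fixes a b c p :: real
  assumes "1 \<le> c"
  shows "(a - b)\<^sup>2 / 2 \<le> (p - a)\<^sup>2 + c * (p - b)\<^sup>2"
proof -
  have "(p - a)\<^sup>2 + (p - b)\<^sup>2 = 2 * (p - (a + b) / 2)\<^sup>2 + (a - b)\<^sup>2 / 2"
    by (simp add: power2_eq_square field_simps)
  moreover have "(p - b)\<^sup>2 \<le> c * (p - b)\<^sup>2"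
    using assms by (simp add: mult_le_cancel_right1)
  moreover have "0 \<le> 2 * (p - (a + b) / 2)\<^sup>2" by simp
  ultimately show ?thesis by linarith
qed

text \<open>No price is good for both instances: the optimal prices \<open>1\<close> and \<open>(2 + \<delta>) / (2 + 2 \<delta>)\<close>
  are \<open>\<delta> / (2 + 2 \<delta>) \<ge> \<delta> / 4\<close> apart.\<close>
lemma hard_round_regret_two_point:
  fixes \<delta> p :: real
  assumes "0 < \<delta>" "\<delta> \<le> 1"
  shows "\<delta>\<^sup>2 / 32 \<le> (p - 1)\<^sup>2 + (1 + \<delta>) * (p - (2 + \<delta>) / (2 * (1 + \<delta>)))\<^sup>2"
proof -
  have "\<delta> / 4 \<le> 1 - (2 + \<delta>) / (2 * (1 + \<delta>))"
    using assms by (simp add: field_simps)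
  then have "(\<delta> / 4)\<^sup>2 \<le> (1 - (2 + \<delta>) / (2 * (1 + \<delta>)))\<^sup>2"
    using assms by (intro power_mono) auto
  then show ?thesis
    using half_sq_dist_le_weighted_sq_dists[of "1 + \<delta>" 1 "(2 + \<delta>) / (2 * (1 + \<delta>))" p] assms
    by (simp add: power_divide)
qed

lemma mult_min_one_le:
  fixes a b c l :: real
  assumes "c \<le> a + b" "0 \<le> a" "0 \<le> b" "0 \<le> l"
  shows "c * min 1 l \<le> a + b * l"
proof -
  have "c * min 1 l \<le> (a + b) * min 1 l"
    using assms by (intro mult_right_mono) auto
  also have "\<dots> \<le> a * 1 + b * l"
    unfolding distrib_right using assms by (intro add_mono mult_left_mono) auto
  finally show ?thesis by simp
qed

lemma hard_regret_sum_ge_overlap: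
  fixes \<pi> :: "('a::euclidean_space, 'b::euclidean_space) obs list \<Rightarrow> ('a \<times> 'b) \<Rightarrow> real"
    and T :: nat and \<delta> :: real
  defines "P \<equiv> noisy_product {..<T} (basis_feature_law :: ('a \<times> 'b) measure)"
    and "L \<equiv> \<lambda>w. exp (log_likelihood_ratio \<pi> (hard_param 1) (hard_param (1 + \<delta>)) T w)"
  assumes price: "\<And>t. t < T \<Longrightarrow> (\<lambda>w. price \<pi> (hard_param 1) w t) \<in> borel_measurable P"
    and \<delta>: "0 < \<delta>" "\<delta> \<le> 1"
  shows "ennreal (real T * \<delta>\<^sup>2 / 32) * (\<integral>\<^sup>+w. ennreal (min 1 (L w)) \<partial>P)
    \<le> hard_regret \<pi> T 1 + hard_regret \<pi> T (1 + \<delta>)"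
proof -
  define G1 where "G1 w = (\<Sum>t<T. (price \<pi> (hard_param 1) w t - 1)\<^sup>2)" for w
  define G2 where "G2 w = (\<Sum>t<T. (1 + \<delta>) * (price \<pi> (hard_param 1) w t - (2 + \<delta>) / (2 * (1 + \<delta>)))\<^sup>2)"
    for w
  note price' = price[unfolded P_def]
  have [measurable]: "L \<in> borel_measurable P" "G1 \<in> borel_measurable P" "G2 \<in> borel_measurable P"
    using borel_measurable_log_likelihood_ratio[OF sets_basis_feature_law order_refl price'] price
    unfolding L_def G1_def[abs_def] G2_def[abs_def] P_def by auto
  have G_nonneg: "0 \<le> G1 w" "0 \<le> G2 w" for w
    using \<delta> by (auto simp: G1_def G2_def intro!: sum_nonneg)
  have sum_ge: "real T * \<delta>\<^sup>2 / 32 \<le> G1 w + G2 w" for w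
  proof -
    have "real T * \<delta>\<^sup>2 / 32 = (\<Sum>t<T. \<delta>\<^sup>2 / 32)" by simp
    also have "\<dots> \<le> G1 w + G2 w"
      using hard_round_regret_two_point[OF \<delta>] unfolding G1_def G2_def sum.distrib[symmetric]
      by (intro sum_mono) (simp add: add.assoc)
    finally show ?thesis .
  qed
  then have "ennreal (real T * \<delta>\<^sup>2 / 32 * min 1 (L w)) \<le> ennreal (G1 w) + ennreal (G2 w) * ennreal (L w)"
    for w
  proof -
    have "ennreal (real T * \<delta>\<^sup>2 / 32 * min 1 (L w)) \<le> ennreal (G1 w + G2 w * L w)"
      using G_nonneg[of w] sum_ge
      by (intro ennreal_leI mult_min_one_le) (auto simp: L_def)
    also have "\<dots> = ennreal (G1 w) + ennreal (G2 w) * ennreal (L w)"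
      using G_nonneg[of w] by (simp add: ennreal_mult L_def)
    finally show ?thesis .
  qed
  then have "(\<integral>\<^sup>+w. ennreal (real T * \<delta>\<^sup>2 / 32 * min 1 (L w)) \<partial>P)
      \<le> (\<integral>\<^sup>+w. ennreal (G1 w) \<partial>P) + (\<integral>\<^sup>+w. ennreal (G2 w) * ennreal (L w) \<partial>P)"
    by (subst nn_integral_add[symmetric]) (auto intro: nn_integral_mono)
  also have "\<dots> = hard_regret \<pi> T 1 + hard_regret \<pi> T (1 + \<delta>)"
    using hard_regret_change_of_measure[OF price', of "1 + \<delta>"]
    by (simp add: hard_regret_def G1_def G2_def L_def P_def)
  also have "(\<integral>\<^sup>+w. ennreal (real T * \<delta>\<^sup>2 / 32 * min 1 (L w)) \<partial>P)
      = (\<integral>\<^sup>+w. ennreal (real T * \<delta>\<^sup>2 / 32) * ennreal (min 1 (L w)) \<partial>P)"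
    by (intro nn_integral_cong ennreal_mult) (auto simp: L_def)
  finally show ?thesis
    by (subst nn_integral_cmult[symmetric]) auto
qed

lemma hard_regret_two_point:
  fixes \<pi> :: "('a::euclidean_space, 'b::euclidean_space) obs list \<Rightarrow> ('a \<times> 'b) \<Rightarrow> real" and T :: nat
  defines "P \<equiv> noisy_product {..<T} (basis_feature_law :: ('a \<times> 'b) measure)"
  assumes price: "\<And>t. t < T \<Longrightarrow> (\<lambda>w. price \<pi> (hard_param 1) w t) \<in> borel_measurable P"
    and \<delta>: "0 < \<delta>" "\<delta> \<le> 1"
  shows "ennreal (min (1 / \<delta>\<^sup>2) (real T * \<delta>\<^sup>2 / 128)) \<le> hard_regret \<pi> T 1 + hard_regret \<pi> T (1 + \<delta>)"
proof (cases "hard_regret \<pi> T 1 < ennreal (1 / \<delta>\<^sup>2)")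
  case False
  have "ennreal (min (1 / \<delta>\<^sup>2) (real T * \<delta>\<^sup>2 / 128)) \<le> ennreal (1 / \<delta>\<^sup>2)"
    by (intro ennreal_leI) simp
  also have "\<dots> \<le> hard_regret \<pi> T 1 + hard_regret \<pi> T (1 + \<delta>)"
    using False by (simp add: add_increasing2)
  finally show ?thesis .
next
  case True
  interpret prob_space P
    unfolding P_def
    by (intro prob_space_PiM prob_space_pair prob_space_basis_feature_law prob_space_std_normal)
  let ?L = "\<lambda>w. exp (log_likelihood_ratio \<pi> (hard_param 1) (hard_param (1 + \<delta>)) T w)"
  have "?L \<in> borel_measurable P"
    using borel_measurable_log_likelihood_ratio[OF sets_basis_feature_law order_refl
        price[unfolded P_def]]
    unfolding P_def by measurable
  then have "integrable P (\<lambda>w. min 1 (?L w))"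
    by (intro Bochner_Integration.integrable_bound[OF integrable_const[of "1::real"] _ AE_I2]) auto
  moreover have "1 / 4 \<le> (\<integral>w. min 1 (?L w) \<partial>P)"
    using hard_likelihood_overlap[OF price[unfolded P_def] \<delta>(1) True] by (simp add: P_def)
  ultimately have "ennreal (1 / 4) \<le> (\<integral>\<^sup>+w. ennreal (min 1 (?L w)) \<partial>P)"
    by (subst nn_integral_eq_integral) auto
  then have "ennreal (real T * \<delta>\<^sup>2 / 32) * ennreal (1 / 4)
      \<le> hard_regret \<pi> T 1 + hard_regret \<pi> T (1 + \<delta>)"
    using hard_regret_sum_ge_overlap[OF price[unfolded P_def] \<delta>]
    by (auto simp: P_def intro: order_trans[OF mult_left_mono])
  moreover have "ennreal (min (1 / \<delta>\<^sup>2) (real T * \<delta>\<^sup>2 / 128))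
      \<le> ennreal (real T * \<delta>\<^sup>2 / 32) * ennreal (1 / 4)"
    by (simp add: ennreal_mult[symmetric] ennreal_leI)
  ultimately show ?thesis by (rule order_trans[rotated])
qed

lemma admissible_policy_price_measurable:
  assumes "admissible_policy pol \<Theta> F E Eh xh yh ph N" "\<theta>' \<in> \<Theta>" "\<theta> \<in> \<Theta>" "t < T"
    and v: "v \<in> space (PiM {..<N} (\<lambda>_. Eh))"
  shows "(\<lambda>w. price (pol T (offline_data \<theta>' xh yh ph N v)) \<theta> w t)
    \<in> borel_measurable (PiM {..<T} (\<lambda>_. F \<Otimes>\<^sub>M E))"
  using measurable_compose[OF measurable_Pair2'[OF v]
      assms(1)[unfolded admissible_policy_def sample_space_def, rule_format, OF assms(2-4)]]
  by (simp add: policy_price_def)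

lemma regret_hard_param_ge:
  fixes pol :: "('a::euclidean_space, 'b::euclidean_space) policy"
  assumes "b > 0"
  shows "(\<integral>\<^sup>+\<omega>. ennreal (\<Sum>t<T. b * (policy_price pol xh yh ph N T \<theta>' (hard_param b) \<omega> t
        - (1 + b) / (2 * b))\<^sup>2) \<partial>sample_space basis_feature_law std_normal std_normal T N)
    \<le> regret pol basis_feature_law std_normal std_normal xh yh ph N T \<theta>' (hard_param b)"
  unfolding regret_def
proof (rule nn_integral_mono_AE)
  let ?F = "basis_feature_law :: ('a \<times> 'b) measure"
  have "prob_space (PiM {..<N} (\<lambda>_. std_normal))"
    by (intro prob_space_PiM prob_space_std_normal)
  then have "distr (sample_space ?F std_normal std_normal T N) (noisy_product {..<T} ?F) fst
      = noisy_product {..<T} ?F"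
    unfolding sample_space_def by (rule prob_space.distr_pair_fst)
  then have "AE w in distr (sample_space ?F std_normal std_normal T N) (noisy_product {..<T} ?F) fst.
      \<forall>t\<in>{..<T}. fst (w t) \<in> Basis \<times> Basis"
    by (simp only:) (rule AE_noisy_product_basis_features[OF finite_lessThan])
  then have "AE \<omega> in sample_space ?F std_normal std_normal T N. \<forall>t\<in>{..<T}. fst (fst \<omega> t) \<in> Basis \<times> Basis"
    by (rule AE_distrD[rotated]) (simp add: sample_space_def)
  then show "AE \<omega> in sample_space basis_feature_law std_normal std_normal T N.
      ennreal (\<Sum>t<T. b * (policy_price pol xh yh ph N T \<theta>' (hard_param b) \<omega> t - (1 + b) / (2 * b))\<^sup>2)
    \<le> ennreal (\<Sum>t<T. opt_revenue (hard_param b) (fst (fst (fst \<omega> t))) (snd (fst (fst \<omega> t)))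
        - revenue (hard_param b) (policy_price pol xh yh ph N T \<theta>' (hard_param b) \<omega> t)
            (fst (fst (fst \<omega> t))) (snd (fst (fst \<omega> t))))"
    by eventually_elim (use assms in \<open>auto simp: revenue_gap_hard_param mem_Times_iff\<close>)
qed

lemma regret_hard_param_ge_offline_average:
  fixes pol :: "('a::euclidean_space, 'b::euclidean_space) policy"
    and xh :: "nat \<Rightarrow> 'a" and yh :: "nat \<Rightarrow> 'b" and ph :: "nat \<Rightarrow> real" and N T :: nat and b :: real
  defines "Q \<equiv> PiM {..<N} (\<lambda>_. std_normal)"
    and "H \<equiv> \<lambda>v. hard_regret (pol T (offline_data (hard_param 1) xh yh ph N v)) T b"
  assumes adm: "admissible_policy pol hard_params basis_feature_law std_normal std_normal xh yh ph N"
    and b: "b \<in> {1..2}"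
  shows "H \<in> borel_measurable Q"
    and "(\<integral>\<^sup>+v. H v \<partial>Q)
      \<le> regret pol basis_feature_law std_normal std_normal xh yh ph N T (hard_param 1) (hard_param b)"
proof -
  let ?P = "noisy_product {..<T} (basis_feature_law :: ('a \<times> 'b) measure)"
  define g where "g \<omega> = ennreal (\<Sum>t<T.
    b * (policy_price pol xh yh ph N T (hard_param 1) (hard_param b) \<omega> t - (1 + b) / (2 * b))\<^sup>2)"
    for \<omega>
  interpret Q: prob_space Q unfolding Q_def by (intro prob_space_PiM prob_space_std_normal)
  interpret pair_sigma_finite ?P Q
    by (intro pair_sigma_finite.intro prob_space_imp_sigma_finite prob_space_PiM prob_space_pair
        prob_space_basis_feature_law prob_space_std_normal Q.prob_space_axioms)
  have "hard_param 1 \<in> hard_params" "hard_param b \<in> hard_params"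
    using b by (auto simp: hard_params_def)
  from adm[unfolded admissible_policy_def sample_space_def, rule_format, OF this]
  have "(\<lambda>\<omega>. policy_price pol xh yh ph N T (hard_param 1) (hard_param b) \<omega> t)
      \<in> borel_measurable (?P \<Otimes>\<^sub>M Q)" if "t < T" for t
    using that unfolding Q_def .
  then have "g \<in> borel_measurable (?P \<Otimes>\<^sub>M Q)"
    unfolding g_def[abs_def] by measurable
  moreover have H: "H = (\<lambda>v. \<integral>\<^sup>+w. g (w, v) \<partial>?P)"
    by (simp add: H_def g_def hard_regret_def policy_price_def fun_eq_iff)
  ultimately show "H \<in> borel_measurable Q"
    using M1.borel_measurable_nn_integral[of "\<lambda>v w. g (w, v)" Q] measurable_pair_swap by auto
  have "(\<integral>\<^sup>+v. H v \<partial>Q) = (\<integral>\<^sup>+\<omega>. g \<omega> \<partial>(?P \<Otimes>\<^sub>M Q))"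
    unfolding H using \<open>g \<in> borel_measurable (?P \<Otimes>\<^sub>M Q)\<close> by (rule nn_integral_snd)
  also have "\<dots>
      \<le> regret pol basis_feature_law std_normal std_normal xh yh ph N T (hard_param 1) (hard_param b)"
    using regret_hard_param_ge[of b] b unfolding g_def sample_space_def Q_def by simp
  finally show "(\<integral>\<^sup>+v. H v \<partial>Q) \<le> \<dots>" .
qed

lemma regret_two_point:
  fixes pol :: "('a::euclidean_space, 'b::euclidean_space) policy"
    and xh :: "nat \<Rightarrow> 'a" and yh :: "nat \<Rightarrow> 'b" and ph :: "nat \<Rightarrow> real" and N T :: nat
  defines "R \<equiv> \<lambda>b.
    regret pol basis_feature_law std_normal std_normal xh yh ph N T (hard_param 1) (hard_param b)"
  assumes adm: "admissible_policy pol hard_params basis_feature_law std_normal std_normal xh yh ph N"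
    and \<delta>: "0 < \<delta>" "\<delta> \<le> 1"
  shows "ennreal (min (1 / \<delta>\<^sup>2) (real T * \<delta>\<^sup>2 / 128)) \<le> R 1 + R (1 + \<delta>)"
proof -
  let ?Q = "PiM {..<N} (\<lambda>_. std_normal)"
  let ?H = "\<lambda>b v. hard_regret (pol T (offline_data (hard_param 1) xh yh ph N v)) T b"
  interpret Q: prob_space ?Q by (intro prob_space_PiM prob_space_std_normal)
  have b: "1 \<in> {1..2::real}" "1 + \<delta> \<in> {1..2}" "hard_param 1 \<in> hard_params"
    using \<delta> by (auto simp: hard_params_def)
  note average = regret_hard_param_ge_offline_average[OF adm]
  have "ennreal (min (1 / \<delta>\<^sup>2) (real T * \<delta>\<^sup>2 / 128))
      = (\<integral>\<^sup>+v. ennreal (min (1 / \<delta>\<^sup>2) (real T * \<delta>\<^sup>2 / 128)) \<partial>?Q)"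
    by (simp add: Q.emeasure_space_1)
  also have "\<dots> \<le> (\<integral>\<^sup>+v. ?H 1 v + ?H (1 + \<delta>) v \<partial>?Q)"
    using admissible_policy_price_measurable[OF adm b(3) b(3)] \<delta>
    by (intro nn_integral_mono hard_regret_two_point) auto
  also have "\<dots> = (\<integral>\<^sup>+v. ?H 1 v \<partial>?Q) + (\<integral>\<^sup>+v. ?H (1 + \<delta>) v \<partial>?Q)"
    using average(1)[OF b(1)] average(1)[OF b(2)] by (rule nn_integral_add)
  also have "\<dots> \<le> R 1 + R (1 + \<delta>)"
    using average(2)[OF b(1)] average(2)[OF b(2)] unfolding R_def by (rule add_mono)
  finally show ?thesis .
qed

lemma sup_regret_hard_params_ge:
  fixes pol :: "('a::euclidean_space, 'b::euclidean_space) policy" and T :: nat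
  assumes adm: "admissible_policy pol hard_params basis_feature_law std_normal std_normal xh yh ph N"
    and T: "1 \<le> T"
  shows "ennreal (sqrt T / 256) \<le> (SUP \<theta>s\<in>hard_params \<times> hard_params.
    regret pol basis_feature_law std_normal std_normal xh yh ph N T (fst \<theta>s) (snd \<theta>s))"
    (is "_ \<le> ?S")
proof -
  define \<delta> where "\<delta> = 1 / sqrt (sqrt T)"
  have \<delta>: "0 < \<delta>" "\<delta> \<le> 1" and \<delta>_sq: "\<delta>\<^sup>2 = 1 / sqrt T"
    using T by (auto simp: \<delta>_def power_divide)
  have "1 / \<delta>\<^sup>2 = sqrt T" "real T * \<delta>\<^sup>2 = sqrt T"
    using T by (simp_all add: \<delta>_sq real_div_sqrt)
  then have "2 * ennreal (sqrt T / 256) = ennreal (min (1 / \<delta>\<^sup>2) (real T * \<delta>\<^sup>2 / 128))"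
    using ennreal_mult[of 2 "sqrt T / 256"] by simp
  also have "\<dots>
      \<le> regret pol basis_feature_law std_normal std_normal xh yh ph N T (hard_param 1) (hard_param 1)
        + regret pol basis_feature_law std_normal std_normal xh yh ph N T (hard_param 1)
            (hard_param (1 + \<delta>))"
    by (rule regret_two_point[OF adm \<delta>])
  also have "\<dots> \<le> 2 * ?S"
    unfolding mult_2 using \<delta>
    by (intro add_mono SUP_upper2[where i="(hard_param 1, hard_param 1)"]
        SUP_upper2[where i="(hard_param 1, hard_param (1 + \<delta>))"]) (auto simp: hard_params_def)
  finally show ?thesis
    by (subst (asm) ennreal_mult_le_mult_iff) auto
qed

theorem corollary2p1:
  shows "\<exists>(\<Theta> :: ('a::euclidean_space \<times> 'b::euclidean_space) set) (X :: 'a set) (Y :: 'b set)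
            (F :: ('a \<times> 'b) measure) (E :: real measure) (Eh :: real measure) (R :: real).
     assumption1 \<Theta> X Y F \<and> 0 < R \<and> subgaussian_zero_mean R E \<and> subgaussian_zero_mean R Eh \<and>
     (\<forall>(N :: nat) (xh :: nat \<Rightarrow> 'a) (yh :: nat \<Rightarrow> 'b) (ph :: nat \<Rightarrow> real).
        (\<forall>n<N. xh n \<in> X \<and> yh n \<in> Y) \<longrightarrow>
        (\<forall>pol :: ('a, 'b) policy. admissible_policy pol \<Theta> F E Eh xh yh ph N \<longrightarrow>
           (\<exists>c>0. \<forall>\<^sub>F T in at_top.
              ennreal (c * sqrt (real T))
                \<le> (SUP \<theta>s\<in>\<Theta> \<times> \<Theta>. regret pol F E Eh xh yh ph N T (fst \<theta>s) (snd \<theta>s)))))"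
proof (intro exI conjI allI impI)
  show "assumption1 hard_params Basis Basis basis_feature_law"
    by (rule assumption1_hard_instance)
  show "subgaussian_zero_mean 1 std_normal"
    by (rule subgaussian_zero_mean_std_normal)
  fix N xh yh ph and pol :: "('a, 'b) policy"
  assume adm: "admissible_policy pol hard_params basis_feature_law std_normal std_normal xh yh ph N"
  show "(0::real) < 1 / 256" by simp
  show "\<forall>\<^sub>F T in at_top. ennreal (1 / 256 * sqrt (real T)) \<le> (SUP \<theta>s\<in>hard_params \<times> hard_params.
      regret pol basis_feature_law std_normal std_normal xh yh ph N T (fst \<theta>s) (snd \<theta>s))"
    using eventually_ge_at_top[of "1::nat"]
    by eventually_elim (simp add: sup_regret_hard_params_ge[OF adm])
qed (simp_all add: subgaussian_zero_mean_std_normal)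
end
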